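(* Let $\sigma,\tau,\theta,\eta\in\mathbb{R}$ and $q\in(-1,1]$. Define $\lambda_0=0$ and $\lambda_{n+1}=\frac{1+q\lambda_n}{1-\sigma\tau\lambda_n}$, assumed well defined with $\lambda_n\neq0$ for all $n\ge1$. Let $(\alpha_n)_{n\ge0},(\beta_n)_{n\ge0},(\gamma_n)_{n\ge0},(\delta_n)_{n\ge0},(\varepsilon_n)_{n\ge1},(\varphi_n)_{n\ge1}$ be real sequences satisfying the system (E1)–(E5) of the context with $\alpha_0=\gamma_0=\delta_0=\varphi_1=0$, $\beta_0=\varepsilon_1=1$, and such that $(\alpha_n,\beta_n)\neq(0,0)$ for all $n\ge0$ and $(\varepsilon_n,\varphi_n)\neq(0,0)$ for all $n\ge1$. Put $\chi_n=\beta_{n-1}\varepsilon_n$ ($n\ge1$). Fix $t>0$ with $a_n(t):=\alpha_nt+\beta_n\ne0$ for all $n\ge0$, set $b_n(t)=\gamma_nt+\delta_n$, $c_n(t)=\varepsilon_nt+\varphi_n$, and let the polynomials $p_n(x;t)$ be defined by $p_{-1}=0$, $p_0=1$ and $xp_n(x;t)=a_n(t)p_{n+1}(x;t)+b_n(t)p_n(x;t)+c_n(t)p_{n-1}(x;t)$ for $n\ge0$ (the last term being absent for $n=0$). Define $$M_n(y)=\frac{\prod_{j=0}^{n-1}a_j(t)}{t^{n/2}}\,p_n(y\sqrt t;t),\qquad n\ge0,$$ and $M_{-1}=0$. Then $M_0=1$ and for all $n\ge0$ $$yM_n(y)=M_{n+1}(y)+\Big(\gamma_n\sqrt t+\frac{\delta_n}{\sqrt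 t}\Big)M_n(y)+\chi_n\Big(1+\sigma\lambda_{n-1}t+\frac{\tau\lambda_{n-1}}{t}+\sigma\tau\lambda_{n-1}^2\Big)M_{n-1}(y),$$ where for $n=0$ the last term is absent.
   Context: The system (E1)–(E5) is: (E1) for $n\ge0$: $\tau\alpha_n\alpha_{n+1}+q\alpha_n\beta_{n+1}+\sigma\beta_n\beta_{n+1}=\alpha_{n+1}\beta_n$; (E2) for $n\ge2$: $\tau\varepsilon_{n-1}\varepsilon_n+q\varepsilon_n\varphi_{n-1}+\sigma\varphi_n\varphi_{n-1}=\varepsilon_{n-1}\varphi_n$; (E3) for $n\ge0$: $\theta\alpha_n+\eta\beta_n+\tau\alpha_n(\gamma_n+\gamma_{n+1})+\sigma\beta_n(\delta_n+\delta_{n+1})+q(\alpha_n\delta_{n+1}+\beta_n\gamma_n)=\beta_n\gamma_{n+1}+\alpha_n\delta_n$; (E4) for $n\ge1$: $\theta\varepsilon_n+\eta\varphi_n+\tau\varepsilon_n(\gamma_n+\gamma_{n-1})+\sigma\varphi_n(\delta_{n-1}+\delta_n)+q(\varphi_n\gamma_n+\delta_{n-1}\varepsilon_n)=\varepsilon_n\delta_n+\varphi_n\gamma_{n-1}$; (E5) for $n\ge1$: $1+\theta\gamma_n+\eta\delta_n+\tau\gamma_n^2+\sigma\delta_n^2+\tau(\alpha_{n-1}\varepsilon_n+\alpha_n\varepsilon_{n+1})+\sigma(\varphi_n\beta_{n-1}+\beta_n\varphi_{n+1})+q(\gamma_n\delta_n+\beta_{n-1}\varepsilon_n+\alpha_n\varphi_{n+1})=\gamma_n\delta_n+\beta_n\varepsilon_{n+1}+\varphi_n\alpha_{n-1}$.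 *)

theory Defs
  imports "HOL-Computational_Algebra.Polynomial" Complex_Main
begin

fun lam :: "real \<Rightarrow> real \<Rightarrow> real \<Rightarrow> nat \<Rightarrow> real" where
  "lam q s t 0 = 0"
| "lam q s t (Suc n) = (1 + q * lam q s t n) / (1 - s * t * lam q s t n)"

fun opoly :: "(nat \<Rightarrow> real) \<Rightarrow> (nat \<Rightarrow> real) \<Rightarrow> (nat \<Rightarrow> real) \<Rightarrow> nat \<Rightarrow> real poly" where
  "opoly a b c 0 = 1"
| "opoly a b c (Suc 0) = smult (1 / a 0) [:- b 0, 1:]"
| "opoly a b c (Suc (Suc n)) =
     smult (1 / a (Suc n)) ([:- b (Suc n), 1:] * opoly a b c (Suc n) - smult (c (Suc n)) (opoly a b c n))"

end

theory Submission
  imports Defs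
begin

text \<open>Multiplying p_n(x) by a_0 \<cdots> a_(n-1) makes the family monic, and the change of variable
  x = y s turns its three-term recurrence into a monic one in y. The only non-obvious
  coefficient of the rescaled recurrence is a_m c_(m+1) / t; equations (E1) and (E2) pin down the ratios
  \<alpha>_n / \<beta>_n = \<sigma> \<lambda>_n and \<phi>_(n+1) / \<epsilon>_(n+1) = \<tau> \<lambda>_n, which factor this product as
  \<chi>_(m+1) (t + \<tau> \<lambda>_m)(1 + \<sigma> \<lambda>_m t).\<close>

definition scaled_opoly ::
    "(nat \<Rightarrow> real) \<Rightarrow> (nat \<Rightarrow> real) \<Rightarrow> (nat \<Rightarrow> real) \<Rightarrow> real \<Rightarrow> nat \<Rightarrow> real \<Rightarrow> real" where
  "scaled_opoly a b c s n y = (\<Prod>j<n. a j) / s ^ n * poly (opoly a b c n) (y * s)"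

lemma scaled_opoly_0 [simp]: "scaled_opoly a b c s 0 y = 1"
  by (simp add: scaled_opoly_def)

lemma scaled_opoly_1:
  assumes "a 0 \<noteq> 0" and "s \<noteq> 0"
  shows "scaled_opoly a b c s 1 y = y - b 0 / s"
  using assms by (simp add: scaled_opoly_def field_simps)

lemma scaled_opoly_recurrence:
  assumes a: "a (Suc m) \<noteq> 0" and s: "s \<noteq> 0"
  shows "y * scaled_opoly a b c s (Suc m) y
           = scaled_opoly a b c s (Suc (Suc m)) y + b (Suc m) / s * scaled_opoly a b c s (Suc m) y
             + c (Suc m) * a m / s\<^sup>2 * scaled_opoly a b c s m y"
proof -
  define A where "A = (\<Prod>j<m. a j)"
  define P0 where "P0 = poly (opoly a b c m) (y * s)"
  define P1 where "P1 = poly (opoly a b c (Suc m)) (y * s)"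
  have N0: "scaled_opoly a b c s m y = A / s ^ m * P0"
    by (simp add: scaled_opoly_def A_def P0_def)
  have N1: "scaled_opoly a b c s (Suc m) y = A * a m / (s ^ m * s) * P1"
    by (simp add: scaled_opoly_def A_def P1_def mult.commute)
  have N2: "scaled_opoly a b c s (Suc (Suc m)) y
      = A * a m * a (Suc m) / (s ^ m * s * s) * ((1 / a (Suc m)) * ((y * s - b (Suc m)) * P1 - c (Suc m) * P0))"
    by (simp add: scaled_opoly_def A_def P0_def P1_def mult.commute mult.left_commute algebra_simps)
  show ?thesis
    unfolding N0 N1 N2 using a s by (simp add: field_simps power2_eq_square)
qed

lemma lam_commute: "lam q s t n = lam q t s n"
  by (induction n) (simp_all add: mult.commute)

lemma ratio_eq_lam:
  fixes s t q :: real and u v :: "nat \<Rightarrow> real"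
  assumes denom: "\<forall>n. 1 - s * t * lam q s t n \<noteq> 0"
    and rel: "\<forall>n. t * u n * u (n+1) + q * u n * v (n+1) + s * v n * v (n+1) = u (n+1) * v n"
    and u0: "u 0 = 0"
    and nz: "\<forall>n. (u n, v n) \<noteq> (0, 0)"
  shows "u n = s * lam q s t n * v n"
proof (induction n)
  case 0
  then show ?case using u0 by simp
next
  case (Suc n)
  define l where "l = lam q s t n"
  have IH: "u n = s * l * v n" using Suc l_def by simp
  have vn: "v n \<noteq> 0" using nz IH by (metis mult_zero_right)
  have "v n * (u (n+1) * (1 - s * t * l) - s * v (n+1) * (1 + q * l)) = 0"
    using rel[rule_format, of n] unfolding IH by (simp add: algebra_simps)
  with vn have "u (n+1) * (1 - s * t * l) = s * v (n+1) * (1 + q * l)" by simp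
  moreover have "1 - s * t * l \<noteq> 0" using denom l_def by simp
  ultimately show ?case by (simp add: l_def field_simps)
qed

lemma shifted_ratio_eq_lam:
  fixes s t q :: real and u v :: "nat \<Rightarrow> real"
  assumes denom: "\<forall>n. 1 - t * s * lam q t s n \<noteq> 0"
    and rel: "\<forall>n\<ge>2. s * v (n-1) * v n + q * v n * u (n-1) + t * u n * u (n-1) = v (n-1) * u n"
    and u1: "u 1 = 0"
    and nz: "\<forall>n\<ge>1. (v n, u n) \<noteq> (0, 0)"
  shows "u (Suc n) = s * lam q t s n * v (Suc n)"
proof -
  have "\<forall>n. 1 - s * t * lam q s t n \<noteq> 0"
    using denom by (simp add: lam_commute[of q s] mult.commute)
  moreover have "\<forall>n. t * u (Suc n) * u (Suc (n+1)) + q * u (Suc n) * v (Suc (n+1))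
      + s * v (Suc n) * v (Suc (n+1)) = u (Suc (n+1)) * v (Suc n)"
    using rel by (auto simp: algebra_simps dest: spec[of _ "n + 2" for n])
  moreover have "\<forall>n. (u (Suc n), v (Suc n)) \<noteq> (0, 0)"
    using nz by auto
  ultimately show ?thesis
    using ratio_eq_lam[of s t q "\<lambda>n. u (Suc n)" "\<lambda>n. v (Suc n)" n] u1
    by (simp add: lam_commute[of q s])
qed

theorem mainTheorem3:
  fixes \<sigma> \<tau> \<theta> \<eta> q t :: real
    and \<alpha> \<beta> \<gamma> \<delta> \<epsilon> \<phi> :: "nat \<Rightarrow> real"
  assumes hq: "-1 < q" "q \<le> 1"
    and hlam_def: "\<forall>n. 1 - \<sigma> * \<tau> * lam q \<sigma> \<tau> n \<noteq> 0"
    and hlam_nz: "\<forall>n\<ge>1. lam q \<sigma> \<tau> n \<noteq> 0"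
    and E1: "\<forall>n. \<tau> * \<alpha> n * \<alpha> (n+1) + q * \<alpha> n * \<beta> (n+1) + \<sigma> * \<beta> n * \<beta> (n+1) = \<alpha> (n+1) * \<beta> n"
    and E2: "\<forall>n\<ge>2. \<tau> * \<epsilon> (n-1) * \<epsilon> n + q * \<epsilon> n * \<phi> (n-1) + \<sigma> * \<phi> n * \<phi> (n-1) = \<epsilon> (n-1) * \<phi> n"
    and E3: "\<forall>n. \<theta> * \<alpha> n + \<eta> * \<beta> n + \<tau> * \<alpha> n * (\<gamma> n + \<gamma> (n+1)) + \<sigma> * \<beta> n * (\<delta> n + \<delta> (n+1))
                 + q * (\<alpha> n * \<delta> (n+1) + \<beta> n * \<gamma> n) = \<beta> n * \<gamma> (n+1) + \<alpha> n * \<delta> n"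
    and E4: "\<forall>n\<ge>1. \<theta> * \<epsilon> n + \<eta> * \<phi> n + \<tau> * \<epsilon> n * (\<gamma> n + \<gamma> (n-1)) + \<sigma> * \<phi> n * (\<delta> (n-1) + \<delta> n)
                 + q * (\<phi> n * \<gamma> n + \<delta> (n-1) * \<epsilon> n) = \<epsilon> n * \<delta> n + \<phi> n * \<gamma> (n-1)"
    and E5: "\<forall>n\<ge>1. 1 + \<theta> * \<gamma> n + \<eta> * \<delta> n + \<tau> * (\<gamma> n)^2 + \<sigma> * (\<delta> n)^2
                 + \<tau> * (\<alpha> (n-1) * \<epsilon> n + \<alpha> n * \<epsilon> (n+1)) + \<sigma> * (\<phi> n * \<beta> (n-1) + \<beta> n * \<phi> (n+1))
                 + q * (\<gamma> n * \<delta> n + \<beta> (n-1) * \<epsilon> n + \<alpha> n * \<phi> (n+1))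
               = \<gamma> n * \<delta> n + \<beta> n * \<epsilon> (n+1) + \<phi> n * \<alpha> (n-1)"
    and init: "\<alpha> 0 = 0" "\<gamma> 0 = 0" "\<delta> 0 = 0" "\<phi> 1 = 0" "\<beta> 0 = 1" "\<epsilon> 1 = 1"
    and nz_ab: "\<forall>n. (\<alpha> n, \<beta> n) \<noteq> (0, 0)"
    and nz_ep: "\<forall>n\<ge>1. (\<epsilon> n, \<phi> n) \<noteq> (0, 0)"
    and ht: "t > 0"
    and ha: "\<forall>n. \<alpha> n * t + \<beta> n \<noteq> 0"
  defines "\<chi> \<equiv> \<lambda>n. \<beta> (n-1) * \<epsilon> n"
    and "M \<equiv> \<lambda>n y. (\<Prod>j<n. \<alpha> j * t + \<beta> j) / sqrt t ^ n
               * poly (opoly (\<lambda>n. \<alpha> n * t + \<beta> n) (\<lambda>n. \<gamma> n * t + \<delta> n) (\<lambda>n. \<epsilon> n * t + \<phi> n) n) (y * sqrt t)"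
  shows "(\<forall>y. M 0 y = 1)
       \<and> (\<forall>y. y * M 0 y = M 1 y + (\<gamma> 0 * sqrt t + \<delta> 0 / sqrt t) * M 0 y)
       \<and> (\<forall>n\<ge>1. \<forall>y. y * M n y = M (n+1) y + (\<gamma> n * sqrt t + \<delta> n / sqrt t) * M n y
            + \<chi> n * (1 + \<sigma> * lam q \<sigma> \<tau> (n-1) * t + \<tau> * lam q \<sigma> \<tau> (n-1) / t
                       + \<sigma> * \<tau> * (lam q \<sigma> \<tau> (n-1))^2) * M (n-1) y)"
proof -
  define a where "a = (\<lambda>n. \<alpha> n * t + \<beta> n)"
  define b where "b = (\<lambda>n. \<gamma> n * t + \<delta> n)"
  define c where "c = (\<lambda>n. \<epsilon> n * t + \<phi> n)"
  have M: "M = scaled_opoly a b c (sqrt t)"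
    by (simp add: M_def a_def b_def c_def scaled_opoly_def fun_eq_iff)
  have a_nz: "a n \<noteq> 0" for n using ha by (simp add: a_def)
  have s: "sqrt t \<noteq> 0" "(sqrt t)\<^sup>2 = t" using ht by simp_all
  have \<alpha>: "\<alpha> m = \<sigma> * lam q \<sigma> \<tau> m * \<beta> m" for m
    using ratio_eq_lam[OF hlam_def] E1 init(1) nz_ab by simp
  have \<phi>: "\<phi> (Suc m) = \<tau> * lam q \<sigma> \<tau> m * \<epsilon> (Suc m)" for m
    using shifted_ratio_eq_lam[OF hlam_def E2 init(4) nz_ep] .
  have b: "b n / sqrt t = \<gamma> n * sqrt t + \<delta> n / sqrt t" for n
    using s by (simp add: b_def field_simps power2_eq_square)
  have ac: "c (Suc m) * a m / t = \<chi> (Suc m) * (1 + \<sigma> * lam q \<sigma> \<tau> m * t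
              + \<tau> * lam q \<sigma> \<tau> m / t + \<sigma> * \<tau> * (lam q \<sigma> \<tau> m)\<^sup>2)" for m
    using ht by (simp add: a_def c_def \<chi>_def \<alpha> \<phi> field_simps power2_eq_square)
  have "n \<ge> 1 \<Longrightarrow> y * M n y = M (n+1) y + (\<gamma> n * sqrt t + \<delta> n / sqrt t) * M n y
          + \<chi> n * (1 + \<sigma> * lam q \<sigma> \<tau> (n-1) * t + \<tau> * lam q \<sigma> \<tau> (n-1) / t
                     + \<sigma> * \<tau> * (lam q \<sigma> \<tau> (n-1))^2) * M (n-1) y" for n y
    using scaled_opoly_recurrence[OF a_nz s(1), where m = "n - 1" and b = b and c = c and y = y]
    by (cases n) (simp_all add: M b ac[symmetric] s(2))
  then show ?thesis
    using scaled_opoly_1[OF a_nz s(1)] init(2,3) by (simp add: M b_def)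
qed

end
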